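(* Let $d\ge1$ and $n=2d+1$. (i) If $(0,g)$ is $d$-good for $\gamma(B_{n-2})$, then $(0,g)$ is also $d$-good for $\gamma(B_{n-1})$. (ii) If $(0,g)$ is $(d+1)$-good for $\gamma(B_{n-1})$, then $(0,g)$ is also $(d+1)$-good for $\gamma(B_n)$.
   Context: $B_n$ is the group of signed permutations of $\{\pm1,\dots,\pm n\}$; with $\sigma_0=0$, $\mathrm{des}_B(\sigma)=|\{i\in\{0,\dots,n-1\}:\sigma_i>\sigma_{i+1}\}|$, $B_n(t)=\sum_{\sigma\in B_n}t^{\mathrm{des}_B(\sigma)}=\sum_{i=0}^{\lfloor n/2\rfloor}\gamma_i(B_n)t^i(1+t)^{n-2i}$, and $\gamma(B_n)=(\gamma_0(B_n),\dots,\gamma_{\lfloor n/2\rfloor}(B_n))$. A simplicial complex is $k$-colorable if its vertices can be colored with $k$ colors so that every face has distinctly colored vertices; a $k$-FFK-vector is the $f$-vector $(f_0,f_1,\dots)$ ($f_i$ = number of faces with $i$ vertices, $f_0=1$) of some $k$-colorable complex. Vectors of different lengths are compared and added after padding with zeros on the right. Goodness: let $f=(f_0,\dots,f_m)$ be a vector of nonnegative integers and $g=(g_1,\dots,g_\ell)$. (a) $(0,g)$ is $(m+1)$-good for $f$ if $\ell=m+1$, $g_{m+1}\ne0$, and there are $m$-FFK-vectors $f^{(1)},\dots,f^{(k)}$, each of the form $(f^{(j)}_0,\dots,f^{(j)}_m)$ with $f^{(j)}_i\le f_i$ for all $i$, such that $g_{i+1}=\sum_j f^{(j)}_i$ for $0\le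 i\le m$. (b) $(0,g)$ is $m$-good for $f$ if $\ell=m$, $g_m\neq0$, and there are $(m-1)$-FFK-vectors $f^{(1)},\dots,f^{(k)}$ of the form $(f^{(j)}_0,\dots,f^{(j)}_{m-1})$ with $f_i\ge(i+1)f^{(j)}_i$ for all $i,j$, such that $g_{i+1}=\sum_jf^{(j)}_i$ for $0\le i\le m-1$. Here $\gamma(B_{2d-1})$ has length $d$ and $\gamma(B_{2d}),\gamma(B_{2d+1})$ have length $d+1$. *)

theory Defs
  imports "HOL-Computational_Algebra.Polynomial"
begin

text \<open>A signed permutation of {+-1,...,+-n} is determined by its values on 1..n;
  we represent it as sigma :: nat => int with sigma 0 = 0 (the convention sigma_0 = 0),
  sigma i = 0 outside {1..n}, and |sigma| restricted to {1..n} a bijection onto {1..n}.\<close>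

definition signed_perms :: "nat \<Rightarrow> (nat \<Rightarrow> int) set" where
  "signed_perms n = {\<sigma>. (\<forall>i. i \<notin> {1..n} \<longrightarrow> \<sigma> i = 0) \<and>
       bij_betw (\<lambda>i. nat \<bar>\<sigma> i\<bar>) {1..n} {1..n}}"

definition desB :: "nat \<Rightarrow> (nat \<Rightarrow> int) \<Rightarrow> nat" where
  "desB n \<sigma> = card {i \<in> {0..<n}. \<sigma> i > \<sigma> (Suc i)}"

definition B_poly :: "nat \<Rightarrow> int poly" where
  "B_poly n = (\<Sum>\<sigma>\<in>signed_perms n. monom 1 (desB n \<sigma>))"

definition gammaB :: "nat \<Rightarrow> int list" where
  "gammaB n = (THE g. length g = n div 2 + 1 \<and>
      B_poly n = (\<Sum>i<length g. smult (g ! i) ([:0, 1:] ^ i * [:1, 1:] ^ (n - 2 * i))))"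

definition simplicial_complex :: "nat set set \<Rightarrow> bool" where
  "simplicial_complex \<Delta> \<longleftrightarrow> finite \<Delta> \<and> {} \<in> \<Delta> \<and> (\<forall>F\<in>\<Delta>. finite F) \<and>
      (\<forall>F\<in>\<Delta>. \<forall>G. G \<subseteq> F \<longrightarrow> G \<in> \<Delta>)"

definition colorable :: "nat \<Rightarrow> nat set set \<Rightarrow> bool" where
  "colorable k \<Delta> \<longleftrightarrow> (\<exists>c :: nat \<Rightarrow> nat. (\<forall>v\<in>\<Union>\<Delta>. c v < k) \<and> (\<forall>F\<in>\<Delta>. inj_on c F))"

text \<open>f_i = number of faces with i vertices (so f_0 = 1).\<close>
definition fvec :: "nat set set \<Rightarrow> nat \<Rightarrow> nat" where
  "fvec \<Delta> i = card {F \<in> \<Delta>. card F = i}"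

definition pad :: "'a::zero list \<Rightarrow> nat \<Rightarrow> 'a" where
  "pad xs i = (if i < length xs then xs ! i else 0)"

definition FFK :: "nat \<Rightarrow> nat list \<Rightarrow> bool" where
  "FFK k h \<longleftrightarrow> (\<exists>\<Delta>. simplicial_complex \<Delta> \<and> colorable k \<Delta> \<and> (\<forall>i. pad h i = fvec \<Delta> i))"

text \<open>In all definitions below the list g = [g_1,...,g_l] (0-based list index i holds g_(i+1)),
  and the predicates express "(0,g) is ...-good for f", f = [f_0,...,f_m].\<close>

text \<open>(a): (0,g) is (m+1)-good for f.\<close>
definition good_a :: "nat \<Rightarrow> int list \<Rightarrow> int list \<Rightarrow> bool" where
  "good_a m f g \<longleftrightarrow> length f = m + 1 \<and> length g = m + 1 \<and> g ! m \<noteq> 0 \<and>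
     (\<exists>hs :: nat list list.
        (\<forall>h\<in>set hs. length h = m + 1 \<and> FFK m h \<and> (\<forall>i\<le>m. int (h ! i) \<le> f ! i)) \<and>
        (\<forall>i\<le>m. g ! i = (\<Sum>h\<leftarrow>hs. int (h ! i))))"

text \<open>(b): (0,g) is m-good for f.\<close>
definition good_b :: "nat \<Rightarrow> int list \<Rightarrow> int list \<Rightarrow> bool" where
  "good_b m f g \<longleftrightarrow> length f = m + 1 \<and> length g = m \<and> g ! (m - 1) \<noteq> 0 \<and>
     (\<exists>hs :: nat list list.
        (\<forall>h\<in>set hs. length h = m \<and> FFK (m - 1) h \<and>
            (\<forall>i<m. int (i + 1) * int (h ! i) \<le> f ! i)) \<and>
        (\<forall>i<m. g ! i = (\<Sum>h\<leftarrow>hs. int (h ! i))))"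

definition good :: "nat \<Rightarrow> int list \<Rightarrow> int list \<Rightarrow> bool" where
  "good k f g \<longleftrightarrow> (if length f = k then good_a (k - 1) f g
                    else if length f = k + 1 then good_b k f g else False)"

end

theory Submission
  imports Defs
begin

(* Inserting +-(m+1) into one of the m+1 slots of a signed permutation of [m] yields every signed
  permutation of [m+1] exactly once. The new letter is extreme, so exactly one of the two positions
  around it is a descent while the pair it separates no longer counts; summing over all insertions
  gives B_{m+1}(t) = (1 + (2m+1)t) B_m(t) + 2t(1-t) B_m'(t). This operator is triangular on the
  basis t^i (1+t)^(m-2i), whence gamma_i(B_{m+1}) = (2i+1) gamma_i(B_m) + 4(m+2-2i) gamma_{i-1}(B_m).
  All gamma_i are therefore nonnegative and gamma_i(B_{m+1}) >= (2i+1) gamma_i(B_m), so the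
  FFK-vectors witnessing goodness for gamma(B_{n-2}) resp. gamma(B_{n-1}) still satisfy the bounds
  (i+1) h_i <= f_i resp. h_i <= f_i for the next gamma-vector. *)

section \<open>Inserting the largest letter into a signed permutation\<close>

lemma signed_perms_outside: "\<sigma> \<in> signed_perms m \<Longrightarrow> i \<notin> {1..m} \<Longrightarrow> \<sigma> i = 0"
  by (simp add: signed_perms_def)

lemma signed_perms_bij: "\<sigma> \<in> signed_perms m \<Longrightarrow> bij_betw (\<lambda>i. nat \<bar>\<sigma> i\<bar>) {1..m} {1..m}"
  by (simp add: signed_perms_def)

lemma signed_perms_abs_le:
  assumes "\<sigma> \<in> signed_perms m"
  shows "\<bar>\<sigma> i\<bar> \<le> int m"
proof (cases "i \<in> {1..m}")
  case True
  with assms have "nat \<bar>\<sigma> i\<bar> \<in> {1..m}"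
    using signed_perms_bij bij_betwE by blast
  then show ?thesis by auto
next
  case False
  with assms have "\<sigma> i = 0" by (rule signed_perms_outside)
  then show ?thesis by simp
qed

lemma signed_perms_memI:
  assumes "\<And>i. i \<notin> {1..m} \<Longrightarrow> \<sigma> i = 0"
    and "(\<lambda>i. nat \<bar>\<sigma> i\<bar>) ` {1..m} = {1..m}"
  shows "\<sigma> \<in> signed_perms m"
proof -
  have "inj_on (\<lambda>i. nat \<bar>\<sigma> i\<bar>) {1..m}"
    using assms(2) by (intro eq_card_imp_inj_on) simp_all
  with assms show ?thesis
    unfolding signed_perms_def bij_betw_def by auto
qed

definition insert_max :: "nat \<Rightarrow> (nat \<Rightarrow> int) \<Rightarrow> nat \<Rightarrow> bool \<Rightarrow> nat \<Rightarrow> int" where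
  "insert_max m \<sigma> j b = (\<lambda>i. if i \<le> j then \<sigma> i
      else if i = Suc j then (if b then int (Suc m) else - int (Suc m))
      else if i \<le> Suc m then \<sigma> (i - 1) else 0)"

lemma insert_max_in_signed_perms:
  assumes \<sigma>: "\<sigma> \<in> signed_perms m" and j: "j \<le> m"
  shows "insert_max m \<sigma> j b \<in> signed_perms (Suc m)"
proof (rule signed_perms_memI)
  let ?a = "\<lambda>i. nat \<bar>insert_max m \<sigma> j b i\<bar>" and ?s = "\<lambda>i. nat \<bar>\<sigma> i\<bar>"
  show "insert_max m \<sigma> j b i = 0" if "i \<notin> {1..Suc m}" for i
  proof -
    have "i = 0 \<or> Suc m < i" using that by auto
    then show ?thesis using j signed_perms_outside[OF \<sigma>, of 0] by (auto simp: insert_max_def)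
  qed
  have split: "{1..Suc m} = {1..j} \<union> {Suc j} \<union> Suc ` {Suc j..m}"
    using j by (auto simp: image_iff intro: bexI[of _ "_ - 1"])
  have blocks: "{1..j} \<union> {Suc j..m} = {1..m}"
    using j by auto
  have "?a ` {1..j} = ?s ` {1..j}"
    by (rule image_cong) (auto simp: insert_max_def)
  moreover have "?a (Suc j) = Suc m"
    by (simp add: insert_max_def) arith
  moreover have "?a ` Suc ` {Suc j..m} = ?s ` {Suc j..m}"
    unfolding image_image by (rule image_cong) (auto simp: insert_max_def)
  ultimately have "?a ` {1..Suc m} = ?s ` ({1..j} \<union> {Suc j..m}) \<union> {Suc m}"
    unfolding split image_Un by auto
  also have "\<dots> = {1..Suc m}"
    using blocks signed_perms_bij[OF \<sigma>] by (auto simp: bij_betw_def)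
  finally show "?a ` {1..Suc m} = {1..Suc m}" .
qed

lemma signed_perms_Suc_obtain_insert_max:
  assumes \<tau>: "\<tau> \<in> signed_perms (Suc m)"
  obtains \<sigma> j b where "\<sigma> \<in> signed_perms m" "j \<le> m" "\<tau> = insert_max m \<sigma> j b"
proof -
  let ?t = "\<lambda>i. nat \<bar>\<tau> i\<bar>"
  have bij: "bij_betw ?t {1..Suc m} {1..Suc m}"
    by (rule signed_perms_bij[OF \<tau>])
  then have "Suc m \<in> ?t ` {1..Suc m}"
    by (simp add: bij_betw_def)
  then obtain p where p: "p \<in> {1..Suc m}" "?t p = Suc m"
    by (elim imageE) auto
  define \<sigma> where "\<sigma> = (\<lambda>i. if i < p then \<tau> i else if i \<le> m then \<tau> (Suc i) else 0)"
  let ?s = "\<lambda>i. nat \<bar>\<sigma> i\<bar>"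
  have "\<sigma> \<in> signed_perms m"
  proof (rule signed_perms_memI)
    show "\<sigma> i = 0" if "i \<notin> {1..m}" for i
    proof -
      have "i = 0 \<or> m < i" using that by auto
      then show ?thesis using p signed_perms_outside[OF \<tau>, of 0] by (auto simp: \<sigma>_def)
    qed
    have blocks: "{1..m} = {1..<p} \<union> {p..m}" and gap: "{1..<p} \<union> {Suc p..Suc m} = {1..Suc m} - {p}"
      using p by auto
    have "?s ` {1..<p} = ?t ` {1..<p}"
      by (rule image_cong) (auto simp: \<sigma>_def)
    moreover have "?s ` {p..m} = ?t ` Suc ` {p..m}"
      unfolding image_image by (rule image_cong) (auto simp: \<sigma>_def)
    ultimately have "?s ` {1..m} = ?t ` ({1..Suc m} - {p})"
      unfolding blocks gap[symmetric] image_Un by simp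
    also have "\<dots> = ?t ` {1..Suc m} - {?t p}"
      using bij p(1) by (subst inj_on_image_set_diff) (auto simp: bij_betw_def)
    also have "\<dots> = {1..m}"
      using bij p(2) by (auto simp: bij_betw_def)
    finally show "?s ` {1..m} = {1..m}" .
  qed
  moreover have "\<tau> = insert_max m \<sigma> (p - 1) (\<tau> p > 0)"
  proof
    fix i
    consider "i < p" | "i = p" | "p < i" "i \<le> Suc m" | "Suc m < i"
      by linarith
    then show "\<tau> i = insert_max m \<sigma> (p - 1) (\<tau> p > 0) i"
    proof cases
      case 1
      then have "i \<le> p - 1" by simp
      with 1 show ?thesis by (simp add: insert_max_def \<sigma>_def)
    next
      case 2
      have "\<tau> p = int (Suc m) \<or> \<tau> p = - int (Suc m)"
        using p(2) by linarith
      then show ?thesis using 2 p(1) by (auto simp: insert_max_def \<sigma>_def)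
    next
      case 3
      then have "\<not> i \<le> p - 1" "i \<noteq> Suc (p - 1)" "\<not> i - 1 < p" "i - 1 \<le> m" "Suc (i - 1) = i"
        using p(1) by auto
      then show ?thesis using 3 by (simp add: insert_max_def \<sigma>_def)
    next
      case 4
      then show ?thesis using p(1) signed_perms_outside[OF \<tau>, of i] by (simp add: insert_max_def \<sigma>_def)
    qed
  qed
  ultimately show ?thesis
    using p(1) by (intro that[of \<sigma> "p - 1"]) auto
qed

lemma insert_max_inj:
  assumes \<sigma>: "\<sigma> \<in> signed_perms m" and \<sigma>': "\<sigma>' \<in> signed_perms m" and "j \<le> m" "j' \<le> m"
    and eq: "insert_max m \<sigma> j b = insert_max m \<sigma>' j' b'"
  shows "\<sigma> = \<sigma>' \<and> j = j' \<and> b = b'"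
proof -
  have eq_at: "insert_max m \<sigma> j b i = insert_max m \<sigma>' j' b' i" for i
    using eq by simp
  have "j = j'"
  proof (rule ccontr)
    assume "j \<noteq> j'"
    then have "\<bar>insert_max m \<sigma>' j' b' (Suc j)\<bar> \<le> int m"
      using signed_perms_abs_le[OF \<sigma>'] by (auto simp: insert_max_def)
    moreover have "\<bar>insert_max m \<sigma> j b (Suc j)\<bar> = int (Suc m)"
      by (simp add: insert_max_def)
    ultimately show False
      using eq_at[of "Suc j"] by simp
  qed
  moreover have "b = b'"
    using eq_at[of "Suc j"] \<open>j = j'\<close> by (auto simp: insert_max_def split: if_splits)
  moreover have "\<sigma> i = \<sigma>' i" for i
  proof -
    consider "i \<le> j" | "j < i" "i \<le> m" | "m < i"
      by linarith
    then show ?thesis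
    proof cases
      case 1
      then show ?thesis using eq_at[of i] \<open>j = j'\<close> by (simp add: insert_max_def)
    next
      case 2
      then show ?thesis using eq_at[of "Suc i"] \<open>j = j'\<close> by (simp add: insert_max_def)
    next
      case 3
      then show ?thesis using signed_perms_outside[OF \<sigma>] signed_perms_outside[OF \<sigma>'] by simp
    qed
  qed
  ultimately show ?thesis by auto
qed

lemma bij_betw_insert_max:
  "bij_betw (\<lambda>(\<sigma>, j, b). insert_max m \<sigma> j b)
     (signed_perms m \<times> {0..m} \<times> UNIV) (signed_perms (Suc m))"
proof (rule bij_betw_imageI)
  show "inj_on (\<lambda>(\<sigma>, j, b). insert_max m \<sigma> j b) (signed_perms m \<times> {0..m} \<times> UNIV)"
    by (rule inj_onI) (clarsimp, metis insert_max_inj)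
  show "(\<lambda>(\<sigma>, j, b). insert_max m \<sigma> j b) ` (signed_perms m \<times> {0..m} \<times> UNIV) = signed_perms (Suc m)"
  proof (intro equalityI subsetI)
    fix \<tau> assume "\<tau> \<in> signed_perms (Suc m)"
    then obtain \<sigma> j b where "\<sigma> \<in> signed_perms m" "j \<le> m" "\<tau> = insert_max m \<sigma> j b"
      by (rule signed_perms_Suc_obtain_insert_max)
    then show "\<tau> \<in> (\<lambda>(\<sigma>, j, b). insert_max m \<sigma> j b) ` (signed_perms m \<times> {0..m} \<times> UNIV)"
      by (intro image_eqI[of _ _ "(\<sigma>, j, b)"]) auto
  qed (auto simp: insert_max_in_signed_perms)
qed

definition descent :: "(nat \<Rightarrow> int) \<Rightarrow> nat \<Rightarrow> nat" where
  "descent \<sigma> i = (if \<sigma> (Suc i) < \<sigma> i then 1 else 0)"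

lemma desB_eq_sum_descent: "desB n \<sigma> = (\<Sum>i\<in>{0..<n}. descent \<sigma> i)"
  unfolding desB_def descent_def by (simp add: sum.If_cases Int_def)

lemma desB_le: "desB n \<sigma> \<le> n"
proof -
  have "desB n \<sigma> \<le> card {0..<n}"
    unfolding desB_def by (rule card_mono) auto
  then show ?thesis by simp
qed

lemma sum_split_at:
  fixes f :: "nat \<Rightarrow> 'a::comm_monoid_add"
  assumes "j < n"
  shows "(\<Sum>i\<in>{0..<n}. f i) = (\<Sum>i\<in>{0..<j}. f i) + f j + (\<Sum>i\<in>{Suc j..<n}. f i)"
proof -
  have "(\<Sum>i\<in>{0..<n}. f i) = (\<Sum>i\<in>{0..<j}. f i) + (\<Sum>i\<in>{j..<n}. f i)"
    using assms by (intro sum.atLeastLessThan_concat[symmetric]) simp_all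
  also have "(\<Sum>i\<in>{j..<n}. f i) = f j + (\<Sum>i\<in>{Suc j..<n}. f i)"
    using assms by (rule sum.atLeast_Suc_lessThan)
  finally show ?thesis by (simp add: add.assoc)
qed

lemma desB_insert_max:
  assumes \<sigma>: "\<sigma> \<in> signed_perms m" and j: "j < m"
  shows "desB (Suc m) (insert_max m \<sigma> j b) + descent \<sigma> j = Suc (desB m \<sigma>)"
proof -
  let ?\<tau> = "insert_max m \<sigma> j b"
  have "\<bar>\<sigma> j\<bar> \<le> int m" "\<bar>\<sigma> (Suc j)\<bar> \<le> int m"
    using signed_perms_abs_le[OF \<sigma>] by auto
  then have jump: "descent ?\<tau> j + descent ?\<tau> (Suc j) = 1"
    by (auto simp: descent_def insert_max_def)
  have before: "(\<Sum>i\<in>{0..<j}. descent ?\<tau> i) = (\<Sum>i\<in>{0..<j}. descent \<sigma> i)"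
    by (rule sum.cong) (auto simp: descent_def insert_max_def)
  have after: "(\<Sum>i\<in>{Suc j..<m}. descent ?\<tau> (Suc i)) = (\<Sum>i\<in>{Suc j..<m}. descent \<sigma> i)"
    by (rule sum.cong) (auto simp: descent_def insert_max_def)
  have "desB (Suc m) ?\<tau> = (\<Sum>i\<in>{0..<j}. descent ?\<tau> i) + descent ?\<tau> j + (\<Sum>i\<in>{Suc j..<Suc m}. descent ?\<tau> i)"
    unfolding desB_eq_sum_descent using j by (intro sum_split_at) simp
  also have "(\<Sum>i\<in>{Suc j..<Suc m}. descent ?\<tau> i) = (\<Sum>i\<in>{j..<m}. descent ?\<tau> (Suc i))"
    by (rule sum.shift_bounds_Suc_ivl)
  also have "\<dots> = descent ?\<tau> (Suc j) + (\<Sum>i\<in>{Suc j..<m}. descent ?\<tau> (Suc i))"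
    using j by (rule sum.atLeast_Suc_lessThan)
  finally have "desB (Suc m) ?\<tau> = (\<Sum>i\<in>{0..<j}. descent \<sigma> i) + 1 + (\<Sum>i\<in>{Suc j..<m}. descent \<sigma> i)"
    using jump before after by simp
  moreover have "desB m \<sigma> = (\<Sum>i\<in>{0..<j}. descent \<sigma> i) + descent \<sigma> j + (\<Sum>i\<in>{Suc j..<m}. descent \<sigma> i)"
    unfolding desB_eq_sum_descent using j by (rule sum_split_at)
  ultimately show ?thesis by simp
qed

lemma desB_insert_max_last:
  assumes \<sigma>: "\<sigma> \<in> signed_perms m"
  shows "desB (Suc m) (insert_max m \<sigma> m b) = desB m \<sigma> + (if b then 0 else 1)"
proof -
  have "\<bar>\<sigma> m\<bar> \<le> int m"
    using signed_perms_abs_le[OF \<sigma>] by auto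
  then have "descent (insert_max m \<sigma> m b) m = (if b then 0 else 1)"
    by (auto simp: descent_def insert_max_def)
  moreover have "(\<Sum>i\<in>{0..<m}. descent (insert_max m \<sigma> m b) i) = (\<Sum>i\<in>{0..<m}. descent \<sigma> i)"
    by (rule sum.cong) (auto simp: descent_def insert_max_def)
  ultimately show ?thesis
    by (simp add: desB_eq_sum_descent)
qed

section \<open>The recurrence for the type-B Eulerian polynomials\<close>

definition polyX :: "int poly" where
  "polyX = [:0, 1:]"

definition eulerian_op :: "nat \<Rightarrow> int poly \<Rightarrow> int poly" where
  "eulerian_op m f = f + of_nat (2 * m + 1) * (polyX * f) + 2 * ((1 - polyX) * (polyX * pderiv f))"

lemma eulerian_op_sum: "eulerian_op m (sum f A) = (\<Sum>x\<in>A. eulerian_op m (f x))"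
  by (simp add: eulerian_op_def higher_pderiv_sum[where n = 1, simplified] sum.distrib sum_distrib_left)

lemma eulerian_op_smult: "eulerian_op m (smult c f) = smult c (eulerian_op m f)"
  by (simp add: eulerian_op_def pderiv_smult smult_add_right mult_smult_right)

lemma polyX_pow: "polyX ^ k = monom 1 k"
  by (simp add: monom_altdef polyX_def)

lemma pderiv_polyX: "pderiv polyX = 1"
  by (simp add: polyX_def pderiv_pCons)

lemma polyX_mult_pderiv_pow: "polyX * pderiv (polyX ^ i) = of_nat i * polyX ^ i"
proof (cases i)
  case (Suc k)
  have "pderiv (polyX ^ Suc k) = of_nat (Suc k) * polyX ^ k"
    by (simp only: pderiv_power_Suc pderiv_polyX of_nat_mult_conv_smult mult_1_right)
  then show ?thesis
    using Suc by (simp add: algebra_simps)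
qed simp

lemma eulerian_op_monom:
  assumes "k \<le> m"
  shows "eulerian_op m (monom 1 k) = of_nat (2 * k + 1) * monom 1 k + of_nat (2 * (m - k) + 1) * monom 1 (Suc k)"
  using assms unfolding polyX_pow[symmetric] eulerian_op_def
  by (simp add: polyX_mult_pderiv_pow of_nat_diff algebra_simps)

lemma sum_monom_desB_insert_max:
  assumes \<sigma>: "\<sigma> \<in> signed_perms m"
  shows "(\<Sum>j\<in>{0..m}. \<Sum>b\<in>UNIV. monom 1 (desB (Suc m) (insert_max m \<sigma> j b)))
    = eulerian_op m (monom 1 (desB m \<sigma>))"
proof -
  define k where "k = desB m \<sigma>"
  let ?A = "monom 1 k :: int poly" and ?B = "monom 1 (Suc k) :: int poly"
  have inner: "(\<Sum>b\<in>UNIV. monom 1 (desB (Suc m) (insert_max m \<sigma> j b)))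
      = 2 * ?B + of_nat (descent \<sigma> j) * (2 * ?A - 2 * ?B)" if "j < m" for j
  proof -
    have "desB (Suc m) (insert_max m \<sigma> j b) = Suc k - descent \<sigma> j" for b
      using desB_insert_max[OF \<sigma> that, of b] by (simp add: k_def)
    then show ?thesis
      by (simp add: UNIV_bool descent_def)
  qed
  have last: "(\<Sum>b\<in>UNIV. monom 1 (desB (Suc m) (insert_max m \<sigma> m b))) = ?A + ?B"
    by (simp add: UNIV_bool desB_insert_max_last[OF \<sigma>] k_def)
  have "(\<Sum>j\<in>{0..<m}. of_nat (descent \<sigma> j)) = (of_nat k :: int poly)"
    by (simp add: k_def desB_eq_sum_descent)
  then have "(\<Sum>j\<in>{0..<m}. 2 * ?B + of_nat (descent \<sigma> j) * (2 * ?A - 2 * ?B))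
      = of_nat m * (2 * ?B) + of_nat k * (2 * ?A - 2 * ?B)"
    by (simp add: sum.distrib sum_distrib_right[symmetric])
  then have "(\<Sum>j\<in>{0..m}. \<Sum>b\<in>UNIV. monom 1 (desB (Suc m) (insert_max m \<sigma> j b)))
      = of_nat m * (2 * ?B) + of_nat k * (2 * ?A - 2 * ?B) + (?A + ?B)"
    using inner last
    by (simp add: atLeastLessThanSuc_atLeastAtMost[symmetric] del: atLeastLessThanSuc_atLeastAtMost)
  moreover have "k \<le> m"
    unfolding k_def by (rule desB_le)
  ultimately show ?thesis
    by (simp add: eulerian_op_monom k_def[symmetric] of_nat_diff algebra_simps)
qed

lemma B_poly_Suc: "B_poly (Suc m) = eulerian_op m (B_poly m)"
proof -
  have "B_poly (Suc m) = (\<Sum>(\<sigma>, j, b) \<in> signed_perms m \<times> {0..m} \<times> UNIV.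
      monom 1 (desB (Suc m) (insert_max m \<sigma> j b)))"
    unfolding B_poly_def using sum.reindex_bij_betw[OF bij_betw_insert_max, symmetric]
    by (simp add: case_prod_beta)
  also have "\<dots> = (\<Sum>\<sigma>\<in>signed_perms m. \<Sum>j\<in>{0..m}. \<Sum>b\<in>UNIV.
      monom 1 (desB (Suc m) (insert_max m \<sigma> j b)))"
    by (simp add: sum.cartesian_product)
  also have "\<dots> = (\<Sum>\<sigma>\<in>signed_perms m. eulerian_op m (monom 1 (desB m \<sigma>)))"
    by (rule sum.cong) (simp_all add: sum_monom_desB_insert_max)
  also have "\<dots> = eulerian_op m (B_poly m)"
    by (simp add: B_poly_def eulerian_op_sum)
  finally show ?thesis .
qed

section \<open>The gamma-vector\<close>

definition gamma_basis :: "nat \<Rightarrow> nat \<Rightarrow> int poly" where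
  "gamma_basis n i = polyX ^ i * (1 + polyX) ^ (n - 2 * i)"

lemma polyX_mult_pderiv_gamma_product:
  "polyX * pderiv (polyX ^ i * (1 + polyX) ^ Suc r)
     = of_nat i * (polyX ^ i * (1 + polyX) ^ Suc r) + of_nat (Suc r) * (polyX ^ Suc i * (1 + polyX) ^ r)"
proof -
  have "pderiv ((1 + polyX) ^ Suc r) = of_nat (Suc r) * (1 + polyX) ^ r"
    by (simp only: pderiv_power_Suc pderiv_add pderiv_polyX pderiv_1 add_0 of_nat_mult_conv_smult mult_1_right)
  moreover have "polyX * pderiv (polyX ^ i * (1 + polyX) ^ Suc r)
      = polyX ^ i * (polyX * pderiv ((1 + polyX) ^ Suc r)) + (1 + polyX) ^ Suc r * (polyX * pderiv (polyX ^ i))"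
    unfolding pderiv_mult by (simp only: distrib_left mult.left_commute)
  ultimately show ?thesis
    by (simp add: polyX_mult_pderiv_pow algebra_simps del: power_Suc) (simp add: algebra_simps)
qed

lemma smult_eq_of_int_mult: "smult c p = of_int c * p"
  by (simp add: of_int_poly)

lemma eulerian_op_gamma_basis:
  assumes "2 * i \<le> m"
  shows "eulerian_op m (gamma_basis m i)
    = smult (2 * int i + 1) (gamma_basis (Suc m) i) + smult (4 * int (m - 2 * i)) (gamma_basis (Suc m) (Suc i))"
proof -
  obtain r where m: "m = 2 * i + r"
    using assms le_Suc_ex by blast
  show ?thesis
  proof (cases r)
    case 0
    then show ?thesis
      using m by (simp add: eulerian_op_def gamma_basis_def polyX_mult_pderiv_pow smult_eq_of_int_mult algebra_simps)
  next
    case (Suc r')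
    have "gamma_basis m i = polyX ^ i * (1 + polyX) ^ Suc r'"
      and "gamma_basis (Suc m) i = polyX ^ i * (1 + polyX) ^ Suc (Suc r')"
      and "gamma_basis (Suc m) (Suc i) = polyX ^ Suc i * (1 + polyX) ^ r'"
      using m Suc by (simp_all add: gamma_basis_def)
    then show ?thesis
      using m Suc unfolding eulerian_op_def
      by (simp only: polyX_mult_pderiv_gamma_product) (simp add: smult_eq_of_int_mult algebra_simps)
  qed
qed

(* The truncated difference m + 2 - 2i is harmless: whenever it truncates, gamma_coeff m (i - 1) = 0. *)
fun gamma_coeff :: "nat \<Rightarrow> nat \<Rightarrow> int" where
  "gamma_coeff 0 i = (if i = 0 then 1 else 0)"
| "gamma_coeff (Suc m) i = (2 * int i + 1) * gamma_coeff m i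
     + (if i = 0 then 0 else 4 * int (m + 2 - 2 * i) * gamma_coeff m (i - 1))"

lemma gamma_coeff_nonneg: "0 \<le> gamma_coeff m i"
  by (induction m arbitrary: i) simp_all

lemma gamma_coeff_eq_0: "m div 2 < i \<Longrightarrow> gamma_coeff m i = 0"
proof (induction m arbitrary: i)
  case (Suc m)
  have "gamma_coeff m i = 0"
    using Suc.prems by (intro Suc.IH) linarith
  moreover have "int (m + 2 - 2 * i) * gamma_coeff m (i - 1) = 0"
  proof (cases "m div 2 < i - 1")
    case False
    with Suc.prems have "m + 2 - 2 * i = 0" by linarith
    then show ?thesis by simp
  qed (simp add: Suc.IH)
  ultimately show ?case by simp
qed simp

lemma gamma_coeff_Suc_ge: "(2 * int i + 1) * gamma_coeff m i \<le> gamma_coeff (Suc m) i"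
  by (simp add: gamma_coeff_nonneg)

lemma B_poly_gamma_expansion: "B_poly n = (\<Sum>i\<le>n. smult (gamma_coeff n i) (gamma_basis n i))"
proof (induction n)
  case 0
  have "signed_perms 0 = {\<lambda>_. 0}"
    by (auto simp: signed_perms_def bij_betw_def)
  then show ?case
    by (simp add: B_poly_def desB_def gamma_basis_def)
next
  case (Suc m)
  let ?up = "\<lambda>i. smult ((2 * int i + 1) * gamma_coeff m i) (gamma_basis (Suc m) i)"
  let ?new = "\<lambda>i. smult (4 * int (m - 2 * i) * gamma_coeff m i) (gamma_basis (Suc m) (Suc i))"
  have "smult (gamma_coeff m i) (eulerian_op m (gamma_basis m i)) = ?up i + ?new i" for i
  proof (cases "2 * i \<le> m")
    case True
    then show ?thesis
      by (simp add: eulerian_op_gamma_basis smult_add_right mult.commute)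
  next
    case False
    then show ?thesis
      by (simp add: gamma_coeff_eq_0)
  qed
  then have "B_poly (Suc m) = (\<Sum>i\<le>m. ?up i) + (\<Sum>i\<le>m. ?new i)"
    by (simp add: B_poly_Suc Suc.IH eulerian_op_sum eulerian_op_smult sum.distrib)
  also have "(\<Sum>i\<le>m. ?up i) = (\<Sum>i\<le>Suc m. ?up i)"
    by (simp add: gamma_coeff_eq_0)
  also have "(\<Sum>i\<le>m. ?new i) = (\<Sum>i\<le>Suc m.
      smult (if i = 0 then 0 else 4 * int (m + 2 - 2 * i) * gamma_coeff m (i - 1)) (gamma_basis (Suc m) i))"
    by (subst sum.atMost_Suc_shift) simp
  finally show ?case
    by (simp add: sum.distrib[symmetric] smult_add_left[symmetric])
qed

lemma coeff_gamma_basis: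
  assumes "i \<le> j"
  shows "coeff (gamma_basis n j) i = (if i = j then 1 else 0)"
proof -
  have "coeff ((1 + polyX) ^ k) 0 = 1" for k
    by (simp add: poly_0_coeff_0[symmetric] polyX_def)
  then show ?thesis
    using assms by (simp add: gamma_basis_def polyX_pow coeff_monom_mult)
qed

lemma gamma_basis_independent:
  assumes "(\<Sum>j<N. smult (c j) (gamma_basis n j)) = 0" and "i < N"
  shows "c i = 0"
  using assms(2)
proof (induction i rule: less_induct)
  case (less i)
  have "c j * coeff (gamma_basis n j) i = (if j = i then c i else 0)" if "j < N" for j
  proof (cases "j < i")
    case True
    then show ?thesis using less.IH[of j] that by simp
  qed (simp add: coeff_gamma_basis)
  then have "coeff (\<Sum>j<N. smult (c j) (gamma_basis n j)) i = c i"
    using less.prems by (simp add: coeff_sum)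
  then show ?case
    using assms(1) by simp
qed

lemma gamma_basis_eq: "gamma_basis n i = [:0, 1:] ^ i * [:1, 1:] ^ (n - 2 * i)"
  by (simp add: gamma_basis_def polyX_def one_pCons)

lemma gammaB_eq: "gammaB n = map (gamma_coeff n) [0..<Suc (n div 2)]"
proof -
  let ?g = "map (gamma_coeff n) [0..<Suc (n div 2)]"
  let ?P = "\<lambda>g. length g = n div 2 + 1 \<and> B_poly n = (\<Sum>i<length g. smult (g ! i) (gamma_basis n i))"
  have "B_poly n = (\<Sum>i<Suc (n div 2). smult (gamma_coeff n i) (gamma_basis n i))"
    unfolding B_poly_gamma_expansion by (rule sum.mono_neutral_right) (auto simp: gamma_coeff_eq_0)
  then have "?P ?g"
    by (simp del: upt_Suc)
  moreover have "g = ?g" if "?P g" for g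
  proof -
    have "(\<Sum>i<Suc (n div 2). smult (g ! i - gamma_coeff n i) (gamma_basis n i)) = 0"
      using that \<open>?P ?g\<close> by (simp add: smult_diff_left sum_subtractf del: upt_Suc)
    then have "g ! i = gamma_coeff n i" if "i < Suc (n div 2)" for i
      using gamma_basis_independent that by fastforce
    then show ?thesis
      using that by (intro nth_equalityI) (simp_all del: upt_Suc)
  qed
  ultimately show ?thesis
    unfolding gammaB_def gamma_basis_eq[symmetric] by (rule the_equality)
qed

lemma length_gammaB: "length (gammaB n) = n div 2 + 1"
  by (simp add: gammaB_eq)

lemma nth_gammaB: "i \<le> n div 2 \<Longrightarrow> gammaB n ! i = gamma_coeff n i"
  by (simp add: gammaB_eq nth_map del: upt_Suc)

lemma gammaB_Suc_ge_mult:
  assumes "i \<le> n div 2"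
  shows "int (i + 1) * gammaB n ! i \<le> gammaB (Suc n) ! i"
proof -
  have "int (i + 1) * gamma_coeff n i \<le> (2 * int i + 1) * gamma_coeff n i"
    using gamma_coeff_nonneg by (intro mult_right_mono) simp_all
  also have "\<dots> \<le> gamma_coeff (Suc n) i"
    by (rule gamma_coeff_Suc_ge)
  finally show ?thesis
    using assms by (simp add: nth_gammaB)
qed

lemma gammaB_Suc_ge:
  assumes "i \<le> n div 2"
  shows "gammaB n ! i \<le> gammaB (Suc n) ! i"
proof -
  have "1 * gamma_coeff n i \<le> int (i + 1) * gamma_coeff n i"
    using gamma_coeff_nonneg by (intro mult_right_mono) simp_all
  then have "gammaB n ! i \<le> int (i + 1) * gammaB n ! i"
    using assms by (simp add: nth_gammaB)
  also have "\<dots> \<le> gammaB (Suc n) ! i"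
    using assms by (rule gammaB_Suc_ge_mult)
  finally show ?thesis .
qed

section \<open>Transfer of goodness\<close>

lemma good_a_mono:
  assumes "good_a m f g" and "length f' = m + 1" and "\<And>i. i \<le> m \<Longrightarrow> f ! i \<le> f' ! i"
  shows "good_a m f' g"
  using assms unfolding good_a_def by (meson order_trans)

lemma good_a_imp_good_b_Suc:
  assumes "good_a m f g" and "length f' = m + 2"
    and "\<And>i. i \<le> m \<Longrightarrow> int (i + 1) * f ! i \<le> f' ! i"
  shows "good_b (Suc m) f' g"
proof -
  obtain hs where hs: "\<forall>h\<in>set hs. length h = m + 1 \<and> FFK m h \<and> (\<forall>i\<le>m. int (h ! i) \<le> f ! i)"
    and g: "length g = m + 1" "g ! m \<noteq> 0" "\<forall>i\<le>m. g ! i = (\<Sum>h\<leftarrow>hs. int (h ! i))"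
    using assms(1) unfolding good_a_def by blast
  have "int (i + 1) * int (h ! i) \<le> f' ! i" if "h \<in> set hs" "i \<le> m" for h i
  proof -
    have "int (h ! i) \<le> f ! i"
      using hs that by blast
    then have "int (i + 1) * int (h ! i) \<le> int (i + 1) * f ! i"
      by (rule mult_left_mono) simp
    also have "\<dots> \<le> f' ! i"
      using assms(3) that(2) .
    finally show ?thesis .
  qed
  then show ?thesis
    unfolding good_b_def using hs g assms(2) by (auto simp: less_Suc_eq_le)
qed

theorem lemma2p5:
  fixes d n :: nat and g :: "int list"
  assumes "d \<ge> 1" and "n = 2 * d + 1"
  shows "(good d (gammaB (n - 2)) g \<longrightarrow> good d (gammaB (n - 1)) g) \<and>
         (good (d + 1) (gammaB (n - 1)) g \<longrightarrow> good (d + 1) (gammaB n) g)"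
proof -
  obtain k where d: "d = Suc k"
    using assms(1) by (cases d) auto
  define m where "m = 2 * k + 1"
  have n: "n - 2 = m" "n - 1 = Suc m" "n = Suc (Suc m)" and half: "m div 2 = k" "Suc m div 2 = d"
    using assms(2) d by (auto simp: m_def)
  have len: "length (gammaB m) = d" "length (gammaB (Suc m)) = d + 1" "length (gammaB (Suc (Suc m))) = d + 1"
    using d by (simp_all add: length_gammaB m_def)
  have "good_b d (gammaB (Suc m)) g" if "good_a k (gammaB m) g"
    unfolding d using len half
    by (intro good_a_imp_good_b_Suc[OF that] gammaB_Suc_ge_mult) (simp_all add: d)
  moreover have "good_a d (gammaB (Suc (Suc m))) g" if "good_a d (gammaB (Suc m)) g"
    using len half by (intro good_a_mono[OF that] gammaB_Suc_ge) simp_all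
  moreover have "d - 1 = k"
    using d by simp
  ultimately show ?thesis
    using len by (simp add: good_def n)
qed

end
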